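(* Let $0<T\le\infty$, and let $F,G\in C^2((0,T))\cap C^1([0,T))$ satisfy $F'(t)\ge0$ and $G(t)\ge 0$ for all $t$. Suppose that for all $t\in(0,T)$, $$F''(t)\ge A(t+1)^{-\alpha}G(t)^q,\qquad G''(t)\ge B(t+1)^{-\beta}F'(t)^p,$$ where $A,B>0$, $p,q>1$ and $\alpha,\beta\ge0$ are constants. Assume $G'(0)>0$. Assume also that there are constants $\kappa>0$, $a>0$ and $t_0\ge0$ such that $G(t)\ge\kappa t^a$ for all $t\in[t_0,T)$. If $$\max\{t_0,\ G(0)/G'(0),\ 1\}<T/2\qquad\text{and}\qquad \beta+\alpha p<p+2+a(pq-1),$$ then $$T\le C\,\kappa^{-\frac{pq-1}{p+2+a(pq-1)-(\beta+\alpha p)}},$$ where $C$ depends only on $A,B,p,q,\alpha,\beta,a$. *)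

theory Defs
  imports "HOL-Analysis.Analysis"
begin

end

theory Submission
  imports Defs "HOL-Analysis.Analysis"
begin

text \<open>
  On the second half \<open>[T/2, T)\<close> of the interval the weights \<open>(t+1) powr (-\<alpha>)\<close>,
  \<open>(t+1) powr (-\<beta>)\<close> are at least \<open>(2T) powr (-\<alpha>)\<close>, \<open>(2T) powr (-\<beta>)\<close>, so the system becomes
  \<open>F'' \<ge> a\<^sub>1 G\<^sup>q\<close>, \<open>G'' \<ge> b\<^sub>1 F'\<^sup>p\<close> with constant coefficients, while \<open>G(T/2) \<ge> \<kappa> (T/2)\<^sup>a\<close>.
  Integrating three times over an interval of length \<open>\<tau>\<close> shows that \<open>G\<close> grows by
  \<open>b\<^sub>1 (a\<^sub>1 m\<^sup>q \<tau>/3)\<^sup>p (\<tau>/3)\<^sup>2\<close> once \<open>G \<ge> m\<close>; choosing \<open>\<tau> \<sim> m powr (-(pq-1)/(p+2))\<close> makes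
  \<open>G\<close> double. The lengths of the successive doubling intervals form a convergent
  geometric series, so \<open>G\<close> would be unbounded on a compact subinterval unless
  \<open>T/2\<close> is at most the sum. Taking logarithms of that inequality gives the bound on \<open>T\<close>.
\<close>

lemma DERIV_lower_bound_imp_linear_growth:
  fixes f f' :: "real \<Rightarrow> real"
  assumes "u \<le> v" "\<And>x. u \<le> x \<Longrightarrow> x \<le> v \<Longrightarrow> DERIV f x :> f' x \<and> f' x \<ge> k"
  shows "f v \<ge> f u + k * (v - u)"
proof -
  have "(\<lambda>x. f x - k * x) u \<le> (\<lambda>x. f x - k * x) v"
  proof (rule DERIV_nonneg_imp_nondecreasing[OF assms(1)])
    fix x assume "u \<le> x" "x \<le> v"
    with assms(2) have d: "DERIV f x :> f' x" and k: "f' x \<ge> k" by auto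
    have "DERIV (\<lambda>x. f x - k * x) x :> f' x - k"
      by (auto intro!: derivative_eq_intros d)
    then show "\<exists>y. DERIV (\<lambda>x. f x - k * x) x :> y \<and> y \<ge> 0" using k by auto
  qed
  then show ?thesis by (simp add: algebra_simps)
qed

text \<open>
  In the next two lemmas \<open>H\<close> stands for \<open>F'\<close> (with derivative \<open>F2\<close>) and \<open>a1\<close>, \<open>b1\<close>
  are the constant coefficients obtained on the second half of the interval.
\<close>

lemma third_interval_growth:
  fixes G G1 G2 H F2 :: "real \<Rightarrow> real" and s0 T a1 b1 p q s \<tau> m :: real
  assumes p: "p > 0" and q: "q > 0" and a1: "a1 > 0" and b1: "b1 > 0"
    and der: "\<And>t. s0 \<le> t \<Longrightarrow> t < T \<Longrightarrow> DERIV G t :> G1 t \<and> DERIV H t :> F2 t \<and> DERIV G1 t :> G2 t"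
    and ineq: "\<And>t. s0 \<le> t \<Longrightarrow> t < T \<Longrightarrow>
      G1 t \<ge> 0 \<and> H t \<ge> 0 \<and> F2 t \<ge> a1 * G t powr q \<and> G2 t \<ge> b1 * H t powr p"
    and s: "s0 \<le> s" "\<tau> > 0" "s + \<tau> < T" and m: "m > 0" "G s \<ge> m"
  shows "G (s + \<tau>) \<ge> m + b1 * (a1 * m powr q * (\<tau>/3)) powr p * (\<tau>/3) * (\<tau>/3)"
proof -
  have G_ge_m: "G t \<ge> m" if "s \<le> t" "t \<le> s + \<tau>" for t
    using DERIV_lower_bound_imp_linear_growth[of s t G G1 0] der ineq that s m by force
  define h where "h = a1 * m powr q * (\<tau>/3)"
  have "h \<ge> 0" using a1 m s by (simp add: h_def)
  have H_ge_h: "H t \<ge> h" if "s + \<tau>/3 \<le> t" "t \<le> s + \<tau>" for t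
  proof -
    have "H t \<ge> H s + (a1 * m powr q) * (t - s)"
    proof (rule DERIV_lower_bound_imp_linear_growth)
      fix x assume x: "s \<le> x" "x \<le> t"
      then have "G x powr q \<ge> m powr q" using G_ge_m that m q by (intro powr_mono2) auto
      then have "a1 * G x powr q \<ge> a1 * m powr q" using a1 by simp
      then show "DERIV H x :> F2 x \<and> F2 x \<ge> a1 * m powr q"
        using der[of x] ineq[of x] x s that by fastforce
    qed (use that s in auto)
    moreover have "H s \<ge> 0" using ineq[of s] s by auto
    moreover have "(a1 * m powr q) * (t - s) \<ge> h" unfolding h_def
      using that a1 m by (intro mult_left_mono) auto
    ultimately show ?thesis by linarith
  qed
  define c where "c = b1 * h powr p"
  have G1_ge: "G1 t \<ge> c * (\<tau>/3)" if "s + 2*\<tau>/3 \<le> t" "t \<le> s + \<tau>" for t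
  proof -
    have "G1 t \<ge> G1 (s + \<tau>/3) + c * (t - (s + \<tau>/3))"
    proof (rule DERIV_lower_bound_imp_linear_growth)
      fix x assume x: "s + \<tau>/3 \<le> x" "x \<le> t"
      then have "H x powr p \<ge> h powr p" using H_ge_h that \<open>h \<ge> 0\<close> p by (intro powr_mono2) auto
      then have "b1 * H x powr p \<ge> c" using b1 unfolding c_def by simp
      then show "DERIV G1 x :> G2 x \<and> G2 x \<ge> c"
        using der[of x] ineq[of x] x s that by fastforce
    qed (use that s in auto)
    moreover have "G1 (s + \<tau>/3) \<ge> 0" using ineq[of "s + \<tau>/3"] s by auto
    moreover have "c * (t - (s + \<tau>/3)) \<ge> c * (\<tau>/3)" using that b1
      unfolding c_def by (intro mult_left_mono) auto
    ultimately show ?thesis by linarith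
  qed
  have "G (s + \<tau>) \<ge> G (s + 2*\<tau>/3) + (c * (\<tau>/3)) * (s + \<tau> - (s + 2*\<tau>/3))"
    by (rule DERIV_lower_bound_imp_linear_growth) (use der G1_ge s in auto)
  moreover have "G (s + 2*\<tau>/3) \<ge> m" using G_ge_m s by auto
  ultimately show ?thesis unfolding c_def h_def by (simp add: algebra_simps)
qed

lemma third_interval_growth_at_doubling_length:
  fixes a1 b1 p q m :: real
  assumes "p > 0" "a1 > 0" "b1 > 0" "m > 0"
  defines "x \<equiv> (b1 * a1 powr p) powr (-1/(p+2)) * m powr (- ((p*q-1)/(p+2)))"
  shows "b1 * (a1 * m powr q * x) powr p * x * x = m"
proof -
  have "x > 0" using assms by (simp add: x_def)
  have ln_x: "ln x = (-1/(p+2)) * (ln b1 + p * ln a1) - ((p*q-1)/(p+2)) * ln m"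
    using assms by (simp add: x_def ln_mult ln_powr)
  have "ln (b1 * (a1 * m powr q * x) powr p * x * x)
      = ln b1 + p * (ln a1 + q * ln m + ln x) + 2 * ln x"
    using assms(1-4) \<open>x > 0\<close> by (simp add: ln_mult ln_powr)
  also have "\<dots> = ln m"
    unfolding ln_x using assms(1-4) by (simp add: divide_simps) (simp add: algebra_simps)
  finally show ?thesis
    using assms(1-4) \<open>x > 0\<close> by (simp add: ln_inj_iff)
qed

lemma powr_mult_power:
  fixes c g M :: real
  assumes "M > 0" "c > 0"
  shows "(M * c ^ k) powr g = M powr g * (c powr g) ^ k"
  using assms by (simp add: powr_mult powr_power powr_powr mult.commute flip: powr_realpow)

lemma doubling_time_bound:
  fixes G G1 G2 H F2 :: "real \<Rightarrow> real" and s0 T a1 b1 p q M :: real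
  assumes p: "p > 0" and q: "q > 0" and pq: "p * q > 1" and a1: "a1 > 0" and b1: "b1 > 0"
    and M: "M > 0" and "s0 < T"
    and der: "\<And>t. s0 \<le> t \<Longrightarrow> t < T \<Longrightarrow> DERIV G t :> G1 t \<and> DERIV H t :> F2 t \<and> DERIV G1 t :> G2 t"
    and ineq: "\<And>t. s0 \<le> t \<Longrightarrow> t < T \<Longrightarrow>
      G1 t \<ge> 0 \<and> H t \<ge> 0 \<and> F2 t \<ge> a1 * G t powr q \<and> G2 t \<ge> b1 * H t powr p"
    and G_s0: "G s0 \<ge> M"
  shows "T - s0 \<le> 3 * (b1 * a1 powr p) powr (-1/(p+2)) * M powr (- ((p*q-1)/(p+2)))
                   / (1 - 2 powr (- ((p*q-1)/(p+2))))"
proof (rule ccontr)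
  define g where "g = (p*q-1)/(p+2)"
  define K where "K = (b1 * a1 powr p) powr (-1/(p+2))"
  define r where "r = (2::real) powr (-g)"
  define S where "S = 3 * K * M powr (-g) / (1 - r)"
  assume "\<not> ?thesis"
  then have "s0 + S < T" unfolding S_def K_def r_def g_def by simp
  have "g > 0" using pq p unfolding g_def by simp
  then have r: "0 < r" "r < 1" unfolding r_def using powr_less_mono[of "-g" 0 "2::real"] by auto
  have "K > 0" unfolding K_def using a1 b1 by simp
  then have "S \<ge> 0" unfolding S_def using M r by simp
  have G_mono: "G u \<le> G v" if "s0 \<le> u" "u \<le> v" "v < T" for u v
    using DERIV_lower_bound_imp_linear_growth[of u v G G1 0] der ineq that by force
  define t where "t k = s0 + S * (1 - r^k)" for k :: nat
  have t_bounds: "s0 \<le> t k \<and> t k \<le> s0 + S" for k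
  proof -
    have "r^k \<le> 1" "r^k \<ge> 0" using r by (auto simp: power_le_one)
    then show ?thesis unfolding t_def using \<open>S \<ge> 0\<close> by (simp add: mult_left_le)
  qed
  have t_Suc: "t (Suc k) = t k + 3 * (K * (M * 2^k) powr (-g))" for k
  proof -
    have "(M * 2^k) powr (-g) = M powr (-g) * r^k" unfolding r_def using powr_mult_power[OF M] by simp
    moreover have "S * (1 - r) = 3 * K * M powr (-g)" unfolding S_def using r by simp
    ultimately have "S * (1 - r) * r^k = 3 * K * (M * 2^k) powr (-g)" by simp
    then show ?thesis unfolding t_def by (simp add: algebra_simps)
  qed
  have G_t: "G (t k) \<ge> M * 2^k" for k
  proof (induction k)
    case 0 then show ?case using G_s0 by (simp add: t_def)
  next
    case (Suc k)
    define m where "m = M * 2^k"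
    define x where "x = K * m powr (-g)"
    have "m > 0" using M by (simp add: m_def)
    then have "x > 0" using \<open>K > 0\<close> by (simp add: x_def)
    have "G (t k + 3*x) \<ge> m + b1 * (a1 * m powr q * (3*x/3)) powr p * (3*x/3) * (3*x/3)"
      by (rule third_interval_growth[OF p q a1 b1 der ineq])
        (use t_bounds[of k] t_bounds[of "Suc k"] \<open>s0 + S < T\<close> t_Suc[of k] \<open>x > 0\<close> \<open>m > 0\<close> Suc.IH
          in \<open>auto simp: x_def m_def\<close>)
    also have "b1 * (a1 * m powr q * (3*x/3)) powr p * (3*x/3) * (3*x/3) = m"
      using third_interval_growth_at_doubling_length[OF p a1 b1 \<open>m > 0\<close>]
      unfolding x_def K_def g_def by simp
    finally show ?case using t_Suc[of k] by (simp add: x_def m_def)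
  qed
  obtain k where k: "G (s0 + S) / M < 2^k" using real_arch_pow[of 2] by fastforce
  have "M * 2^k \<le> G (s0 + S)"
    using G_t[of k] G_mono t_bounds \<open>s0 + S < T\<close> by (meson order_trans)
  with k M show False by (simp add: field_simps)
qed

definition lifespan_constant :: "real \<Rightarrow> real \<Rightarrow> real \<Rightarrow> real \<Rightarrow> real \<Rightarrow> real \<Rightarrow> real \<Rightarrow> real" where
  "lifespan_constant A B p q \<alpha> \<beta> a =
     exp (((p + 2) * (ln 3 - ln (1 - 2 powr (- ((p*q - 1) / (p + 2)))) + ln 2)
            - ln B - p * ln A + (\<beta> + \<alpha> * p + a * (p*q - 1)) * ln 2)
          / (p + 2 + a * (p * q - 1) - (\<beta> + \<alpha> * p)))"

lemma lifespan_bound_of_doubling_bound: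
  fixes A B p q \<alpha> \<beta> a \<kappa> T :: real
  assumes A: "A > 0" and B: "B > 0" and p: "p > 0" and pq: "p * q > 1" and \<kappa>: "\<kappa> > 0" and T: "T > 0"
    and D: "p + 2 + a * (p * q - 1) - (\<beta> + \<alpha> * p) > 0"
    and bound: "T/2 \<le> 3 * (B * (2*T) powr (-\<beta>) * (A * (2*T) powr (-\<alpha>)) powr p) powr (-1/(p+2))
                     * (\<kappa> * (T/2) powr a) powr (- ((p*q-1)/(p+2))) / (1 - 2 powr (- ((p*q-1)/(p+2))))"
  shows "T \<le> lifespan_constant A B p q \<alpha> \<beta> a * \<kappa> powr (- (p * q - 1) / (p + 2 + a * (p * q - 1) - (\<beta> + \<alpha> * p)))"
proof -
  define g where "g = (p*q-1)/(p+2)"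
  define r where "r = (2::real) powr (-g)"
  define D where "D = p + 2 + a * (p * q - 1) - (\<beta> + \<alpha> * p)"
  define E where "E = (p + 2) * (ln 3 - ln (1 - r) + ln 2)
                        - ln B - p * ln A + (\<beta> + \<alpha> * p + a * (p*q - 1)) * ln 2"
  define Y where "Y = 3 * (B * (2*T) powr (-\<beta>) * (A * (2*T) powr (-\<alpha>)) powr p) powr (-1/(p+2))
                        * (\<kappa> * (T/2) powr a) powr (-g) / (1 - r)"
  have "g > 0" using pq p unfolding g_def by simp
  then have "r < 1" unfolding r_def using powr_less_mono[of "-g" 0 "2::real"] by simp
  then have "Y > 0" unfolding Y_def using A B \<kappa> T by simp
  have "ln (T/2) \<le> ln Y" using bound \<open>Y > 0\<close> T unfolding Y_def r_def g_def by simp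
  then have ln_T_le: "(p + 2) * (ln T - ln 2) \<le> (p + 2) * ln Y"
    using T p by (simp add: ln_div)
  define X where "X = ln B - \<beta> * (ln 2 + ln T) + p * (ln A - \<alpha> * (ln 2 + ln T))"
  define Z where "Z = ln \<kappa> + a * (ln T - ln 2)"
  have ln_Y: "ln Y = ln 3 - ln (1 - r) + (-1/(p+2)) * X - g * Z"
    unfolding Y_def X_def Z_def using A B \<kappa> T \<open>r < 1\<close>
    by (simp add: ln_mult ln_div ln_powr algebra_simps)
  have "(p + 2) * ln Y = (p + 2) * (ln 3 - ln (1 - r)) + ((p + 2) * (-1/(p+2))) * X - ((p + 2) * g) * Z"
    unfolding ln_Y by (simp only: ring_distribs mult.assoc)
  also have "\<dots> = (p + 2) * (ln 3 - ln (1 - r)) - X - (p*q - 1) * Z"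
    using p unfolding g_def by simp
  finally have "D * ln T \<le> E - (p*q - 1) * ln \<kappa>"
    using ln_T_le unfolding D_def E_def X_def Z_def by (simp add: algebra_simps)
  moreover have "D > 0" using D unfolding D_def .
  ultimately have "ln T \<le> (E - (p*q - 1) * ln \<kappa>) / D"
    by (simp add: pos_le_divide_eq mult.commute)
  also have "\<dots> = E / D + (- (p*q - 1) / D) * ln \<kappa>"
    using \<open>D > 0\<close> by (simp add: field_simps)
  finally have "ln T \<le> E / D + (- (p*q - 1) / D) * ln \<kappa>" .
  then have "T \<le> exp (E / D + (- (p*q - 1) / D) * ln \<kappa>)"
    using T by (metis exp_le_cancel_iff exp_ln)
  also have "\<dots> = lifespan_constant A B p q \<alpha> \<beta> a * \<kappa> powr (- (p*q - 1) / D)"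
    using \<kappa> unfolding lifespan_constant_def E_def D_def r_def g_def by (simp add: powr_def exp_add)
  finally show ?thesis unfolding D_def .
qed

lemma lifespan_bound_real:
  fixes A B p q \<alpha> \<beta> a \<kappa> t0 T :: real and G G1 G2 F1 F2 :: "real \<Rightarrow> real"
  assumes A: "A > 0" and B: "B > 0" and p: "p > 1" and q: "q > 1" and \<alpha>: "\<alpha> \<ge> 0" and \<beta>: "\<beta> \<ge> 0"
    and D: "p + 2 + a * (p * q - 1) - (\<beta> + \<alpha> * p) > 0"
    and T: "T > 2" and t0: "t0 < T/2" and \<kappa>: "\<kappa> > 0"
    and der: "\<And>t. 0 < t \<Longrightarrow> t < T \<Longrightarrow> DERIV G t :> G1 t \<and> DERIV F1 t :> F2 t \<and> DERIV G1 t :> G2 t"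
    and cont: "continuous_on {0..T/2} G1"
    and nonneg: "\<And>t. 0 \<le> t \<Longrightarrow> t < T \<Longrightarrow> F1 t \<ge> 0 \<and> G t \<ge> 0"
    and ode: "\<And>t. 0 < t \<Longrightarrow> t < T \<Longrightarrow> F2 t \<ge> A * (t + 1) powr (- \<alpha>) * G t powr q \<and>
        G2 t \<ge> B * (t + 1) powr (- \<beta>) * F1 t powr p"
    and G1_0: "G1 0 > 0"
    and G_ge: "\<And>t. t0 \<le> t \<Longrightarrow> t < T \<Longrightarrow> G t \<ge> \<kappa> * t powr a"
  shows "T \<le> lifespan_constant A B p q \<alpha> \<beta> a * \<kappa> powr (- (p * q - 1) / (p + 2 + a * (p * q - 1) - (\<beta> + \<alpha> * p)))"
proof -
  define a1 where "a1 = A * (2*T) powr (-\<alpha>)"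
  define b1 where "b1 = B * (2*T) powr (-\<beta>)"
  have "p * q > 1" using p q by (rule less_1_mult)
  have "a1 > 0" "b1 > 0" using A B T by (auto simp: a1_def b1_def)
  have G2_nonneg: "G2 t \<ge> 0" if "0 < t" "t < T" for t
    using ode[OF that] B by (smt (verit) mult_nonneg_nonneg powr_ge_zero)
  have "G1 (T/2) \<ge> G1 0"
  proof (rule DERIV_nonneg_imp_increasing_open[of 0 "T/2" G1])
    fix x :: real assume x: "0 < x" "x < T/2"
    then show "\<exists>y. DERIV G1 x :> y \<and> y \<ge> 0" using der[of x] G2_nonneg[of x] T by auto
  qed (use T cont in auto)
  then have G1_nonneg: "G1 t \<ge> 0" if "T/2 \<le> t" "t < T" for t
    using DERIV_lower_bound_imp_linear_growth[of "T/2" t G1 G2 0] der G2_nonneg that T G1_0 by force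
  have "T - T/2 \<le> 3 * (b1 * a1 powr p) powr (-1/(p+2)) * (\<kappa> * (T/2) powr a) powr (- ((p*q-1)/(p+2)))
                   / (1 - 2 powr (- ((p*q-1)/(p+2))))"
  proof (rule doubling_time_bound[where H=F1])
    fix t assume t: "T/2 \<le> t" "t < T"
    then show "DERIV G t :> G1 t \<and> DERIV F1 t :> F2 t \<and> DERIV G1 t :> G2 t" using der T by auto
    have "0 < t + 1" "t + 1 \<le> 2 * T" using t T by auto
    then have "(t + 1) powr (-\<alpha>) \<ge> (2*T) powr (-\<alpha>)" "(t + 1) powr (-\<beta>) \<ge> (2*T) powr (-\<beta>)"
      using powr_mono2'[of "-\<alpha>" "t+1" "2*T"] powr_mono2'[of "-\<beta>" "t+1" "2*T"] \<alpha> \<beta> by auto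
    then have "a1 * G t powr q \<le> A * (t + 1) powr (- \<alpha>) * G t powr q"
      and "b1 * F1 t powr p \<le> B * (t + 1) powr (- \<beta>) * F1 t powr p"
      unfolding a1_def b1_def using A B by (auto intro!: mult_right_mono)
    then show "G1 t \<ge> 0 \<and> F1 t \<ge> 0 \<and> F2 t \<ge> a1 * G t powr q \<and> G2 t \<ge> b1 * F1 t powr p"
      using ode[of t] nonneg[of t] G1_nonneg[OF t] t T by auto
  next
    show "G (T/2) \<ge> \<kappa> * (T/2) powr a" using G_ge[of "T/2"] t0 T by auto
  qed (use p q \<open>p * q > 1\<close> \<open>a1 > 0\<close> \<open>b1 > 0\<close> \<kappa> T in auto)
  then show ?thesis
    by (intro lifespan_bound_of_doubling_bound[OF A B _ \<open>p * q > 1\<close> \<kappa> _ D])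
      (use p T in \<open>simp_all add: a1_def b1_def\<close>)
qed

lemma lifespan_bound:
  fixes A B p q \<alpha> \<beta> a \<kappa> t0 :: real and T :: ereal and F G G1 G2 F1 F2 :: "real \<Rightarrow> real"
  assumes A: "A > 0" and B: "B > 0" and p: "p > 1" and q: "q > 1" and \<alpha>: "\<alpha> \<ge> 0" and \<beta>: "\<beta> \<ge> 0"
    and D: "p + 2 + a * (p * q - 1) - (\<beta> + \<alpha> * p) > 0"
    and "T > 0" and t0: "t0 \<ge> 0" and \<kappa>: "\<kappa> > 0"
    and der1: "\<forall>t. 0 \<le> t \<and> ereal t < T \<longrightarrow>
        (F has_real_derivative F1 t) (at t within {s. 0 \<le> s \<and> ereal s < T}) \<and>
        (G has_real_derivative G1 t) (at t within {s. 0 \<le> s \<and> ereal s < T})"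
    and cont: "continuous_on {s. 0 \<le> s \<and> ereal s < T} G1"
    and der2: "\<forall>t. 0 < t \<and> ereal t < T \<longrightarrow>
        (F1 has_real_derivative F2 t) (at t) \<and> (G1 has_real_derivative G2 t) (at t)"
    and nonneg: "\<forall>t. 0 \<le> t \<and> ereal t < T \<longrightarrow> F1 t \<ge> 0 \<and> G t \<ge> 0"
    and ode: "\<forall>t. 0 < t \<and> ereal t < T \<longrightarrow>
        F2 t \<ge> A * (t + 1) powr (- \<alpha>) * G t powr q \<and>
        G2 t \<ge> B * (t + 1) powr (- \<beta>) * F1 t powr p"
    and G1_0: "G1 0 > 0"
    and G_ge: "\<forall>t. t0 \<le> t \<and> ereal t < T \<longrightarrow> G t \<ge> \<kappa> * t powr a"
    and T_large: "ereal (max t0 1) < T / 2"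
  shows "T \<le> ereal (lifespan_constant A B p q \<alpha> \<beta> a *
                     \<kappa> powr (- (p * q - 1) / (p + 2 + a * (p * q - 1) - (\<beta> + \<alpha> * p))))"
    (is "T \<le> ereal ?bound")
proof -
  have real_bound: "R \<le> ?bound" if R: "R > 2" "t0 < R/2" "ereal R \<le> T" for R
  proof -
    have below_T: "ereal t < T" if "t < R" for t
      using that R(3) less_le_trans[of "ereal t" "ereal R" T] by simp
    show ?thesis
    proof (rule lifespan_bound_real[OF A B p q \<alpha> \<beta> D R(1,2) \<kappa>])
      fix t :: real assume t: "0 < t" "t < R"
      have "at t within {s. 0 \<le> s \<and> ereal s < T} = at t"
        by (rule at_within_open_subset[of t "{0<..<R}"]) (use t below_T in auto)
      moreover have "(G has_real_derivative G1 t) (at t within {s. 0 \<le> s \<and> ereal s < T})"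
        using der1 t below_T[OF t(2)] by auto
      ultimately show "DERIV G t :> G1 t \<and> DERIV F1 t :> F2 t \<and> DERIV G1 t :> G2 t"
        using der2 t below_T[OF t(2)] by auto
    next
      show "continuous_on {0..R/2} G1"
        by (rule continuous_on_subset[OF cont]) (use below_T R in auto)
    qed (use nonneg ode G1_0 G_ge below_T in auto)
  qed
  show ?thesis
  proof (cases T)
    case (real R)
    with T_large have "R > 2" "t0 < R/2" by auto
    with real real_bound[of R] show ?thesis by simp
  next
    case PInf
    define R where "R = 2 * (t0 + 1 + ?bound)"
    have "?bound > 0" using \<kappa> by (simp add: lifespan_constant_def)
    with real_bound[of R] t0 PInf show ?thesis unfolding R_def by simp
  qed (use \<open>T > 0\<close> in simp)
qed

theorem lemma2p1:
  fixes A B p q \<alpha> \<beta> a :: real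
  assumes "A > 0" "B > 0" "p > 1" "q > 1" "\<alpha> \<ge> 0" "\<beta> \<ge> 0" "a > 0"
    and "\<beta> + \<alpha> * p < p + 2 + a * (p * q - 1)"
  shows "\<exists>C > 0. \<forall>(T::ereal) (F::real \<Rightarrow> real) F1 F2 (G::real \<Rightarrow> real) G1 G2 (\<kappa>::real) (t0::real).
    T > 0 \<longrightarrow>
    (\<forall>t. 0 \<le> t \<and> ereal t < T \<longrightarrow>
        (F has_real_derivative F1 t) (at t within {s. 0 \<le> s \<and> ereal s < T}) \<and>
        (G has_real_derivative G1 t) (at t within {s. 0 \<le> s \<and> ereal s < T})) \<longrightarrow>
    continuous_on {s. 0 \<le> s \<and> ereal s < T} F1 \<longrightarrow>
    continuous_on {s. 0 \<le> s \<and> ereal s < T} G1 \<longrightarrow>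
    (\<forall>t. 0 < t \<and> ereal t < T \<longrightarrow>
        (F1 has_real_derivative F2 t) (at t) \<and> (G1 has_real_derivative G2 t) (at t)) \<longrightarrow>
    continuous_on {s. 0 < s \<and> ereal s < T} F2 \<longrightarrow>
    continuous_on {s. 0 < s \<and> ereal s < T} G2 \<longrightarrow>
    (\<forall>t. 0 \<le> t \<and> ereal t < T \<longrightarrow> F1 t \<ge> 0 \<and> G t \<ge> 0) \<longrightarrow>
    (\<forall>t. 0 < t \<and> ereal t < T \<longrightarrow>
        F2 t \<ge> A * (t + 1) powr (- \<alpha>) * G t powr q \<and>
        G2 t \<ge> B * (t + 1) powr (- \<beta>) * F1 t powr p) \<longrightarrow>
    G1 0 > 0 \<longrightarrow>
    \<kappa> > 0 \<longrightarrow> t0 \<ge> 0 \<longrightarrow>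
    (\<forall>t. t0 \<le> t \<and> ereal t < T \<longrightarrow> G t \<ge> \<kappa> * t powr a) \<longrightarrow>
    ereal (max t0 (max (G 0 / G1 0) 1)) < T / 2 \<longrightarrow>
    T \<le> ereal (C * \<kappa> powr (- (p * q - 1) / (p + 2 + a * (p * q - 1) - (\<beta> + \<alpha> * p))))"
  apply (intro exI[of _ "lifespan_constant A B p q \<alpha> \<beta> a"] conjI allI impI)
   apply (simp add: lifespan_constant_def)
  subgoal premises prems for T F F1 F2 G G1 G2 \<kappa> t0
  proof -
    have "p + 2 + a * (p * q - 1) - (\<beta> + \<alpha> * p) > 0" using assms(8) by simp
    moreover have "ereal (max t0 1) < T / 2"
      using prems(14) by (rule le_less_trans[rotated]) (auto simp: max_def)
    ultimately show ?thesis
      using lifespan_bound[OF assms(1-6) _ prems(1,12,11,2,4,5,8,9,10,13)] by blast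
  qed
  done

end
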